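(* Let $k$ be a field and let $A$ be a $k$-algebra with two graded algebra decompositions $A=\bigoplus_{i=0}^{\infty}A_i=\bigoplus_{i=0}^{\infty}B_i$ (each a grading making $A$ a graded algebra) such that (1) $A_0=B_0=k$; (2) $A$ is generated as an algebra by $A_1$, and also generated as an algebra by $B_1$; (3) either $A_1$ or $B_1$ is finite dimensional over $k$. Then there is an algebra automorphism $\phi:A\to A$ such that $\phi(A_i)=B_i$ for all $i$.
   Context: All algebras are associative unital $k$-algebras. *)

theory Defs
  imports Main "HOL.Vector_Spaces"
begin

definition k_algebra :: "('k::field \<Rightarrow> 'a::ring_1 \<Rightarrow> 'a) \<Rightarrow> bool" where
  "k_algebra scale \<longleftrightarrow> module scale \<and>
     (\<forall>c x y. scale c (x * y) = scale c x * y \<and> scale c (x * y) = x * scale c y)"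

definition graded_decomp :: "('k::field \<Rightarrow> 'a::ring_1 \<Rightarrow> 'a) \<Rightarrow> (nat \<Rightarrow> 'a set) \<Rightarrow> bool" where
  "graded_decomp scale G \<longleftrightarrow>
     (\<forall>i. module.subspace scale (G i)) \<and>
     (\<forall>x. \<exists>!f. finite {i. f i \<noteq> 0} \<and> (\<forall>i. f i \<in> G i) \<and> x = (\<Sum>i\<in>{i. f i \<noteq> 0}. f i)) \<and>
     1 \<in> G 0 \<and>
     (\<forall>i j x y. x \<in> G i \<longrightarrow> y \<in> G j \<longrightarrow> x * y \<in> G (i + j))"

inductive_set subalg_gen :: "('k::field \<Rightarrow> 'a::ring_1 \<Rightarrow> 'a) \<Rightarrow> 'a set \<Rightarrow> 'a set"
  for scale :: "'k \<Rightarrow> 'a \<Rightarrow> 'a" and S :: "'a set" where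
  gen: "x \<in> S \<Longrightarrow> x \<in> subalg_gen scale S"
| one: "1 \<in> subalg_gen scale S"
| zero: "0 \<in> subalg_gen scale S"
| add: "x \<in> subalg_gen scale S \<Longrightarrow> y \<in> subalg_gen scale S \<Longrightarrow> x + y \<in> subalg_gen scale S"
| mult: "x \<in> subalg_gen scale S \<Longrightarrow> y \<in> subalg_gen scale S \<Longrightarrow> x * y \<in> subalg_gen scale S"
| smult: "x \<in> subalg_gen scale S \<Longrightarrow> scale c x \<in> subalg_gen scale S"

definition fin_dim :: "('k::field \<Rightarrow> 'a::ring_1 \<Rightarrow> 'a) \<Rightarrow> 'a set \<Rightarrow> bool" where
  "fin_dim scale V \<longleftrightarrow> (\<exists>F. finite F \<and> F \<subseteq> V \<and> V \<subseteq> module.span scale F)"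

definition alg_automorphism :: "('k::field \<Rightarrow> 'a::ring_1 \<Rightarrow> 'a) \<Rightarrow> ('a \<Rightarrow> 'a) \<Rightarrow> bool" where
  "alg_automorphism scale \<phi> \<longleftrightarrow> bij \<phi> \<and> \<phi> 1 = 1 \<and>
     (\<forall>x y. \<phi> (x + y) = \<phi> x + \<phi> y) \<and> (\<forall>x y. \<phi> (x * y) = \<phi> x * \<phi> y) \<and>
     (\<forall>c x. \<phi> (scale c x) = scale c (\<phi> x))"

end

theory Submission
  imports Defs
begin

text \<open>
  For a grading A write A_{\<le>n}, A_{<n}, A_{\<ge>n} for the elements whose A-components vanish
  above degree n, from degree n on, below degree n (\<open>deg_le\<close>, \<open>deg_lt\<close>, \<open>deg_ge\<close>).
  Every a \<in> A_1 is a scalar plus an element of A_{\<le>1} \<inter> B_{\<ge>1}, and products of such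
  elements stay filtered in both gradings; since A_1 generates, A = A_{<d} + B_{\<ge>d} for every d,
  and symmetrically with the gradings exchanged. Hence the truncations
  A_{\<le>n} \<rightarrow> B_{\<le>n} \<rightarrow> A_{\<le>n} compose to a surjection, which is injective because A_{\<le>n}
  is finite dimensional (if only B_1 is, finiteness is transported along the same surjection).
  It kills B_{\<ge>n+1}, so A_{<n+1} \<inter> B_{\<ge>n+1} = 0 and A = A_{<d} \<oplus> B_{\<ge>d}. The automorphism sends
  a \<in> A_d to the degree-d B-component of its B_{\<ge>d}-part: the decompositions are compatible
  with products, so this map is multiplicative, it is injective by directness of the sums, and
  it hits B_1, hence all of A.
\<close>

locale algebra_space = vector_space scale for scale :: "'k::field \<Rightarrow> 'a::ring_1 \<Rightarrow> 'a" +
  assumes scale_mult_left: "scale c (x * y) = scale c x * y"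
    and scale_mult_right: "scale c (x * y) = x * scale c y"
begin

lemma span_mult_closed:
  assumes a: "a \<in> span X" and b: "b \<in> span Y"
    and XY: "\<And>x y. x \<in> X \<Longrightarrow> y \<in> Y \<Longrightarrow> x * y \<in> span W"
  shows "a * b \<in> span W"
proof -
  have x_mult: "x * b \<in> span W" if x: "x \<in> X" for x
    using b
  proof (induct rule: span_induct)
    case (step y) then show ?case using XY x by auto
  next
    case base show ?case
      by (rule subspaceI)
        (auto simp: distrib_left span_add scale_mult_right[symmetric] span_scale span_zero)
  qed
  show ?thesis using a
  proof (induct rule: span_induct)
    case (step x) then show ?case using x_mult by auto
  next
    case base show ?case
      by (rule subspaceI)
        (auto simp: distrib_right span_add scale_mult_left[symmetric] span_scale span_zero)
  qed
qed

lemma subalg_gen_subset_span: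
  assumes S: "S \<subseteq> span Z" and one: "1 \<in> Z"
    and mult: "\<And>z z'. z \<in> Z \<Longrightarrow> z' \<in> Z \<Longrightarrow> z * z' \<in> Z"
  shows "subalg_gen scale S \<subseteq> span Z"
proof
  fix x assume "x \<in> subalg_gen scale S" then show "x \<in> span Z"
  proof induct
    case (mult x y) then show ?case
      using span_mult_closed[of x Z y Z Z] assms(3) span_base by blast
  qed (use S one in \<open>auto simp: span_base span_zero span_add span_scale\<close>)
qed

end

context vector_space
begin

lemma inj_on_if_surj_on_finite_span:
  assumes F: "finite F" "V \<subseteq> span F" and f: "module_hom scale scale f" and surj: "f ` V = V"
  shows "inj_on f V"
proof -
  obtain B where B: "B \<subseteq> V" "independent B" "V \<subseteq> span B" "card B = dim V"
    by (rule basis_exists)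
  have finB: "finite B" using independent_span_bound[OF F(1) B(2)] B(1) F(2) by auto
  let ?C = "f ` B"
  have finC: "finite ?C" using finB by simp
  have VC: "V \<subseteq> span ?C" using module_hom.spans_image[OF f B(3)] surj by simp
  have card_C: "card ?C = dim V"
    using dim_le_card[OF VC finC] card_image_le[OF finB, of f] B(4) by linarith
  have "independent ?C"
  proof
    assume "dependent ?C"
    then obtain a where a: "a \<in> ?C" "a \<in> span (?C - {a})" unfolding dependent_def by blast
    have "?C \<subseteq> span (?C - {a})"
    proof
      fix y assume "y \<in> ?C"
      then show "y \<in> span (?C - {a})" using a(2) by (cases "y = a") (auto intro: span_base)
    qed
    then have "V \<subseteq> span (?C - {a})" using VC span_minimal subspace_span by blast
    then have "dim V \<le> card (?C - {a})" using dim_le_card finC by blast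
    moreover have "card (?C - {a}) < card ?C" using a(1) finC by (meson card_Diff1_less)
    ultimately show False using card_C by linarith
  qed
  moreover have "inj_on f B" using card_C B(4) finB by (simp add: eq_card_imp_inj_on)
  ultimately have "inj_on f (span B)"
    using module_hom.inj_on_span_iff_independent_image[OF f] by blast
  then show ?thesis using B(3) inj_on_subset by blast
qed

end

primrec products :: "'a::monoid_mult set \<Rightarrow> nat \<Rightarrow> 'a set" where
  "products F 0 = {1}"
| "products F (Suc n) = (\<lambda>(a, f). a * f) ` (products F n \<times> F)"

lemma finite_products: "finite F \<Longrightarrow> finite (products F n)"
  by (induct n) auto

lemma products_1 [simp]: "products F 1 = F"
  by force

lemma products_mult: "a \<in> products F i \<Longrightarrow> b \<in> products F j \<Longrightarrow> a * b \<in> products F (i + j)"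
proof (induct j arbitrary: b)
  case (Suc j)
  then obtain b' f where b: "b = b' * f" "b' \<in> products F j" "f \<in> F" by auto
  then have "a * b' \<in> products F (i + j)" using Suc by blast
  then show ?case using b by (auto simp: mult.assoc intro!: rev_image_eqI[of "(a * b', f)"])
qed simp

locale graded_algebra = algebra_space scale for scale :: "'k::field \<Rightarrow> 'a::ring_1 \<Rightarrow> 'a" +
  fixes G :: "nat \<Rightarrow> 'a set"
  assumes graded: "graded_decomp scale G"
begin

lemma subspace_grade: "subspace (G i)"
  using graded unfolding graded_decomp_def by auto

lemma one_in_grade_0: "1 \<in> G 0"
  using graded unfolding graded_decomp_def by auto

lemma mult_grade: "x \<in> G i \<Longrightarrow> y \<in> G j \<Longrightarrow> x * y \<in> G (i + j)"
  using graded unfolding graded_decomp_def by auto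

lemma zero_in_grade [simp]: "0 \<in> G i"
  by (rule subspace_0[OF subspace_grade])

definition component :: "nat \<Rightarrow> 'a \<Rightarrow> 'a" where
  "component i x =
     (THE f. finite {i. f i \<noteq> 0} \<and> (\<forall>i. f i \<in> G i) \<and> x = (\<Sum>i\<in>{i. f i \<noteq> 0}. f i)) i"

lemma unique_decomposition:
  "\<exists>!f. finite {i. f i \<noteq> 0} \<and> (\<forall>i. f i \<in> G i) \<and> x = (\<Sum>i\<in>{i. f i \<noteq> 0}. f i)"
  using graded unfolding graded_decomp_def by blast

lemma component_spec:
  "finite {i. component i x \<noteq> 0} \<and> (\<forall>i. component i x \<in> G i) \<and>
   x = (\<Sum>i\<in>{i. component i x \<noteq> 0}. component i x)"
  unfolding component_def by (rule theI'[OF unique_decomposition])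

lemma finite_component_support: "finite {i. component i x \<noteq> 0}"
  using component_spec by blast

lemma component_in_grade [simp]: "component i x \<in> G i"
  using component_spec by blast

lemma sum_components:
  assumes "finite S" "{i. component i x \<noteq> 0} \<subseteq> S"
  shows "x = (\<Sum>i\<in>S. component i x)"
proof -
  have "x = (\<Sum>i\<in>{i. component i x \<noteq> 0}. component i x)" using component_spec by blast
  also have "\<dots> = (\<Sum>i\<in>S. component i x)"
    by (rule sum.mono_neutral_left) (use assms in auto)
  finally show ?thesis .
qed

lemma component_unique:
  assumes S: "finite S" and f: "\<And>i. f i \<in> G i" "\<And>i. i \<notin> S \<Longrightarrow> f i = 0"
    and x: "x = (\<Sum>i\<in>S. f i)"
  shows "component i x = f i"
proof -
  have supp: "{i. f i \<noteq> 0} \<subseteq> S" using f(2) by auto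
  have "x = (\<Sum>i\<in>{i. f i \<noteq> 0}. f i)"
    unfolding x by (rule sum.mono_neutral_right) (use S supp in auto)
  moreover have "finite {i. f i \<noteq> 0}" using S supp by (rule finite_subset[rotated])
  ultimately have "(\<lambda>i. component i x) = f"
    unfolding component_def using f(1) by (intro the1_equality[OF unique_decomposition]) auto
  then show ?thesis by (rule fun_cong)
qed

lemma component_homogeneous: "x \<in> G j \<Longrightarrow> component i x = (if i = j then x else 0)"
  by (rule component_unique[of "{j}"]) auto

lemma component_add: "component i (x + y) = component i x + component i y"
proof -
  let ?S = "{i. component i x \<noteq> 0} \<union> {i. component i y \<noteq> 0}"
  have S: "finite ?S" using finite_component_support by auto
  then have "x = (\<Sum>i\<in>?S. component i x)" "y = (\<Sum>i\<in>?S. component i y)"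
    by (auto intro: sum_components)
  then show ?thesis
    by (intro component_unique[OF S]) (auto simp: sum.distrib subspace_add[OF subspace_grade])
qed

lemma component_scale: "component i (scale c x) = scale c (component i x)"
proof -
  let ?S = "{i. component i x \<noteq> 0}"
  have S: "finite ?S" by (rule finite_component_support)
  then have "x = (\<Sum>i\<in>?S. component i x)" by (auto intro: sum_components)
  then show ?thesis
    by (intro component_unique[OF S])
      (auto simp: subspace_scale[OF subspace_grade] simp flip: scale_sum_right)
qed

lemma linear_component: "module_hom scale scale (component i)"
  by (simp add: module_hom_iff component_add component_scale module_axioms)

lemmas component_zero [simp] = module_hom.zero[OF linear_component]
  and component_diff = module_hom.diff[OF linear_component]
  and component_sum = module_hom.sum[OF linear_component]

lemma component_component: "component i (component j x) = (if i = j then component j x else 0)"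
  by (rule component_homogeneous) simp

lemma components_zero_imp_zero: "(\<And>i. component i x = 0) \<Longrightarrow> x = 0"
  using sum_components[of "{}" x] by auto

lemma component_mult_eq_0:
  assumes "\<And>i j. i + j = k \<Longrightarrow> component i x = 0 \<or> component j y = 0"
  shows "component k (x * y) = 0"
proof -
  let ?S = "{i. component i x \<noteq> 0}" and ?T = "{j. component j y \<noteq> 0}"
  have "x * y = (\<Sum>i\<in>?S. component i x) * (\<Sum>j\<in>?T. component j y)"
    using sum_components[OF finite_component_support order_refl] by simp
  also have "\<dots> = (\<Sum>i\<in>?S. \<Sum>j\<in>?T. component i x * component j y)" by (rule sum_product)
  finally have "component k (x * y) = (\<Sum>i\<in>?S. \<Sum>j\<in>?T. component k (component i x * component j y))"
    by (simp add: component_sum)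
  also have "\<dots> = 0"
    using assms by (intro sum.neutral ballI)
      (auto simp: component_homogeneous[OF mult_grade[OF component_in_grade component_in_grade]])
  finally show ?thesis .
qed

definition deg_le :: "nat \<Rightarrow> 'a set" where "deg_le n = {x. \<forall>i. n < i \<longrightarrow> component i x = 0}"
definition deg_ge :: "nat \<Rightarrow> 'a set" where "deg_ge n = {x. \<forall>i. i < n \<longrightarrow> component i x = 0}"
definition deg_lt :: "nat \<Rightarrow> 'a set" where "deg_lt n = {x. \<forall>i. n \<le> i \<longrightarrow> component i x = 0}"

lemma subspace_deg_le: "subspace (deg_le n)"
  unfolding deg_le_def by (rule subspaceI) (auto simp: component_add component_scale)

lemma subspace_deg_ge: "subspace (deg_ge n)"
  unfolding deg_ge_def by (rule subspaceI) (auto simp: component_add component_scale)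

lemma subspace_deg_lt: "subspace (deg_lt n)"
  unfolding deg_lt_def by (rule subspaceI) (auto simp: component_add component_scale)

lemma deg_lt_Suc: "deg_lt (Suc n) = deg_le n"
  unfolding deg_lt_def deg_le_def by (auto simp: Suc_le_eq)

lemma grade_subset_deg_le: "G i \<subseteq> deg_le i"
  unfolding deg_le_def by (auto simp: component_homogeneous)

lemma grade_subset_deg_ge: "G i \<subseteq> deg_ge i"
  unfolding deg_ge_def by (auto simp: component_homogeneous)

lemma deg_le_mono: "m \<le> n \<Longrightarrow> deg_le m \<subseteq> deg_le n"
  unfolding deg_le_def by auto

lemma deg_ge_antimono: "m \<le> n \<Longrightarrow> deg_ge n \<subseteq> deg_ge m"
  unfolding deg_ge_def by auto

lemma deg_le_subset_deg_lt: "m < n \<Longrightarrow> deg_le m \<subseteq> deg_lt n"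
  unfolding deg_lt_def deg_le_def by auto

lemma deg_lt_subset_deg_le: "deg_lt n \<subseteq> deg_le n"
  unfolding deg_lt_def deg_le_def by auto

lemma deg_lt_0: "deg_lt 0 = {0}"
  unfolding deg_lt_def using components_zero_imp_zero by auto

lemma deg_lt_inter_grade: "x \<in> deg_lt i \<Longrightarrow> x \<in> G i \<Longrightarrow> x = 0"
  unfolding deg_lt_def by (auto simp: component_homogeneous)

lemma deg_le_sum_components: "x \<in> deg_le n \<Longrightarrow> x = (\<Sum>i\<le>n. component i x)"
  by (rule sum_components) (auto simp: deg_le_def not_less[symmetric])

lemma deg_ge_component_zero: "x \<in> deg_ge n \<Longrightarrow> i < n \<Longrightarrow> component i x = 0"
  unfolding deg_ge_def by auto

lemma deg_ge_minus_component: "x \<in> deg_ge i \<Longrightarrow> x - component i x \<in> deg_ge (Suc i)"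
  unfolding deg_ge_def by (auto simp: component_diff component_component less_Suc_eq)

lemma mult_deg_le:
  assumes "x \<in> deg_le m" "y \<in> deg_le n" shows "x * y \<in> deg_le (m + n)"
  unfolding deg_le_def
proof (intro CollectI allI impI component_mult_eq_0)
  fix k i j assume "m + n < k" "i + j = k"
  then have "m < i \<or> n < j" by linarith
  then show "component i x = 0 \<or> component j y = 0" using assms unfolding deg_le_def by auto
qed

lemma mult_deg_ge:
  assumes "x \<in> deg_ge m" "y \<in> deg_ge n" shows "x * y \<in> deg_ge (m + n)"
  unfolding deg_ge_def
proof (intro CollectI allI impI component_mult_eq_0)
  fix k i j assume "k < m + n" "i + j = k"
  then have "i < m \<or> j < n" by linarith
  then show "component i x = 0 \<or> component j y = 0" using assms unfolding deg_ge_def by auto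
qed

lemma mult_deg_lt_deg_le:
  assumes "x \<in> deg_lt m" "y \<in> deg_le n" shows "x * y \<in> deg_lt (m + n)"
  unfolding deg_lt_def
proof (intro CollectI allI impI component_mult_eq_0)
  fix k i j assume "m + n \<le> k" "i + j = k"
  then have "m \<le> i \<or> n < j" by linarith
  then show "component i x = 0 \<or> component j y = 0"
    using assms unfolding deg_lt_def deg_le_def by auto
qed

lemma mult_deg_le_deg_lt:
  assumes "x \<in> deg_le m" "y \<in> deg_lt n" shows "x * y \<in> deg_lt (m + n)"
  unfolding deg_lt_def
proof (intro CollectI allI impI component_mult_eq_0)
  fix k i j assume "m + n \<le> k" "i + j = k"
  then have "m < i \<or> n \<le> j" by linarith
  then show "component i x = 0 \<or> component j y = 0"
    using assms unfolding deg_lt_def deg_le_def by auto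
qed

lemma component_mult_deg_ge:
  assumes x: "x \<in> deg_ge i" and y: "y \<in> deg_ge j"
  shows "component (i + j) (x * y) = component i x * component j y"
proof -
  define x' where "x' = x - component i x"
  define y' where "y' = y - component j y"
  have x': "x' \<in> deg_ge (Suc i)" unfolding x'_def by (rule deg_ge_minus_component[OF x])
  have y': "y' \<in> deg_ge (Suc j)" unfolding y'_def by (rule deg_ge_minus_component[OF y])
  have xi: "component i x \<in> deg_ge i" and yj: "component j y \<in> deg_ge j"
    using grade_subset_deg_ge component_in_grade by blast+
  have "x * y = component i x * component j y + (component i x * y' + x' * component j y + x' * y')"
    unfolding x'_def y'_def by (simp add: algebra_simps)
  moreover have "component (i + j) (component i x * y') = 0"
    by (rule deg_ge_component_zero[OF mult_deg_ge[OF xi y']]) simp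
  moreover have "component (i + j) (x' * component j y) = 0"
    by (rule deg_ge_component_zero[OF mult_deg_ge[OF x' yj]]) simp
  moreover have "component (i + j) (x' * y') = 0"
    by (rule deg_ge_component_zero[OF mult_deg_ge[OF x' y']]) simp
  ultimately show ?thesis
    by (simp add: component_add component_homogeneous[OF mult_grade[OF component_in_grade component_in_grade]])
qed

definition trunc :: "nat \<Rightarrow> 'a \<Rightarrow> 'a" where "trunc n x = (\<Sum>i\<le>n. component i x)"

lemma linear_trunc: "module_hom scale scale (trunc n)"
  by (simp add: module_hom_iff trunc_def component_add component_scale module_axioms
      sum.distrib scale_sum_right)

lemma trunc_in_deg_le: "trunc n x \<in> deg_le n"
  unfolding deg_le_def trunc_def by (auto simp: component_sum component_component)

lemma trunc_deg_le: "x \<in> deg_le n \<Longrightarrow> trunc n x = x"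
  unfolding trunc_def by (simp add: deg_le_sum_components[symmetric])

lemma trunc_deg_ge: "x \<in> deg_ge (Suc n) \<Longrightarrow> trunc n x = 0"
  unfolding trunc_def deg_ge_def by auto

lemma grade_subset_span_products:
  assumes gen: "subalg_gen scale (G 1) = UNIV" and F: "G 1 \<subseteq> span F"
  shows "G i \<subseteq> span (products F i)"
proof
  define Z where "Z = {z. \<exists>m. z \<in> G m \<and> z \<in> span (products F m)}"
  have "subalg_gen scale (G 1) \<subseteq> span Z"
  proof (rule subalg_gen_subset_span)
    show "G 1 \<subseteq> span Z"
    proof
      fix x assume "x \<in> G 1"
      moreover have "x \<in> span (products F 1)" unfolding products_1 using F \<open>x \<in> G 1\<close> by blast
      ultimately show "x \<in> span Z" unfolding Z_def by (blast intro: span_base)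
    qed
    show "1 \<in> Z"
      unfolding Z_def using one_in_grade_0 by (auto intro!: span_base exI[of _ 0])
  next
    fix z z' assume "z \<in> Z" "z' \<in> Z"
    then obtain m m' where z: "z \<in> G m" "z \<in> span (products F m)"
      and z': "z' \<in> G m'" "z' \<in> span (products F m')" unfolding Z_def by blast
    have "z * z' \<in> span (products F (m + m'))"
      using z(2) z'(2) by (rule span_mult_closed) (blast intro: span_base products_mult)
    then show "z * z' \<in> Z" unfolding Z_def using mult_grade[OF z(1) z'(1)] by blast
  qed
  fix x assume x: "x \<in> G i"
  have "x \<in> span Z" using \<open>subalg_gen scale (G 1) \<subseteq> span Z\<close> gen by blast
  then have "component i x \<in> span (products F i)"
  proof (induct rule: span_induct)
    case base show ?case
      by (rule subspaceI) (auto simp: component_add component_scale span_add span_scale span_zero)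
  next
    case (step z)
    then obtain m where "z \<in> G m" "z \<in> span (products F m)" unfolding Z_def by auto
    then show ?case by (auto simp: component_homogeneous span_zero)
  qed
  then show "x \<in> span (products F i)" using component_homogeneous[OF x, of i] by simp
qed

definition finite_truncations :: bool where
  "finite_truncations \<longleftrightarrow> (\<forall>n. \<exists>F. finite F \<and> deg_le n \<subseteq> span F)"

lemma finite_truncations_if_fin_dim_grade_1:
  assumes gen: "subalg_gen scale (G 1) = UNIV" and fd: "fin_dim scale (G 1)"
  shows finite_truncations
  unfolding finite_truncations_def
proof
  fix n
  obtain F where F: "finite F" "G 1 \<subseteq> span F" using fd unfolding fin_dim_def by blast
  let ?P = "\<Union>i\<le>n. products F i"
  have "deg_le n \<subseteq> span ?P"
  proof
    fix x assume "x \<in> deg_le n"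
    then have "x = (\<Sum>i\<le>n. component i x)" by (rule deg_le_sum_components)
    moreover have "component i x \<in> span ?P" if "i \<le> n" for i
    proof -
      have "span (products F i) \<subseteq> span ?P" using that by (intro span_mono) auto
      then show ?thesis using grade_subset_span_products[OF gen F(2), of i] component_in_grade by blast
    qed
    ultimately show "x \<in> span ?P" by (metis span_sum atMost_iff)
  qed
  moreover have "finite ?P" using finite_products[OF F(1)] by auto
  ultimately show "\<exists>F. finite F \<and> deg_le n \<subseteq> span F" by blast
qed

end

locale two_gradings = A: graded_algebra scale A + B: graded_algebra scale B
  for scale :: "'k::field \<Rightarrow> 'a::ring_1 \<Rightarrow> 'a" and A B +
  assumes A0: "A 0 = range (\<lambda>c. scale c 1)" and B0: "B 0 = range (\<lambda>c. scale c 1)"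
    and genA: "subalg_gen scale (A 1) = UNIV" and genB: "subalg_gen scale (B 1) = UNIV"
begin

lemma swap: "two_gradings scale B A"
  using two_gradings_axioms unfolding two_gradings_def two_gradings_axioms_def by blast

lemma grade_1_minus_B_component_0:
  assumes a: "a \<in> A 1"
  shows "a - B.component 0 a \<in> A.deg_le 1" "a - B.component 0 a \<in> B.deg_ge 1"
proof -
  have "B.component 0 a \<in> A 0" using A0 B0 B.component_in_grade by metis
  then have "a \<in> A.deg_le 1" "B.component 0 a \<in> A.deg_le 1"
    using a A.grade_subset_deg_le A.deg_le_mono[of 0 1] by auto
  then show "a - B.component 0 a \<in> A.deg_le 1" by (rule A.subspace_diff[OF A.subspace_deg_le])
  show "a - B.component 0 a \<in> B.deg_ge 1"
    unfolding B.deg_ge_def by (auto simp: B.component_diff B.component_component)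
qed

lemma in_span_deg_le_deg_ge: "x \<in> A.span {z. \<exists>m. z \<in> A.deg_le m \<and> z \<in> B.deg_ge m}"
proof -
  define Z where "Z = {z. \<exists>m. z \<in> A.deg_le m \<and> z \<in> B.deg_ge m}"
  have deg_0: "A 0 \<subseteq> Z"
    using A.grade_subset_deg_le unfolding Z_def B.deg_ge_def by blast
  have "subalg_gen scale (A 1) \<subseteq> A.span Z"
  proof (rule A.subalg_gen_subset_span)
    show "A 1 \<subseteq> A.span Z"
    proof
      fix a assume a: "a \<in> A 1"
      have "a - B.component 0 a \<in> Z"
        using grade_1_minus_B_component_0[OF a] unfolding Z_def by blast
      moreover have "B.component 0 a \<in> Z" using A0 B0 B.component_in_grade deg_0 by blast
      ultimately have "(a - B.component 0 a) + B.component 0 a \<in> A.span Z"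
        by (intro A.span_add A.span_base)
      then show "a \<in> A.span Z" by simp
    qed
    show "1 \<in> Z" using A.one_in_grade_0 deg_0 by blast
    show "z * z' \<in> Z" if "z \<in> Z" "z' \<in> Z" for z z'
      using that unfolding Z_def by (blast intro: A.mult_deg_le B.mult_deg_ge)
  qed
  then show ?thesis using genA unfolding Z_def by blast
qed

lemma decompose_deg_lt_deg_ge: "\<exists>p t. p \<in> A.deg_lt d \<and> t \<in> B.deg_ge d \<and> x = p + t"
proof -
  let ?P = "{p + t |p t. p \<in> A.deg_lt d \<and> t \<in> B.deg_ge d}"
  have "{z. \<exists>m. z \<in> A.deg_le m \<and> z \<in> B.deg_ge m} \<subseteq> ?P"
  proof
    fix z assume "z \<in> {z. \<exists>m. z \<in> A.deg_le m \<and> z \<in> B.deg_ge m}"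
    then obtain m where z: "z \<in> A.deg_le m" "z \<in> B.deg_ge m" by blast
    show "z \<in> ?P"
    proof (cases "m < d")
      case True
      then have "z \<in> A.deg_lt d" using A.deg_le_subset_deg_lt z(1) by blast
      then show ?thesis using A.subspace_0[OF B.subspace_deg_ge] by force
    next
      case False
      then have "z \<in> B.deg_ge d" using B.deg_ge_antimono z(2) by (meson not_less subsetD)
      then show ?thesis using A.subspace_0[OF A.subspace_deg_lt] by force
    qed
  qed
  then have "A.span {z. \<exists>m. z \<in> A.deg_le m \<and> z \<in> B.deg_ge m} \<subseteq> ?P"
    using A.span_minimal A.subspace_sums[OF A.subspace_deg_lt B.subspace_deg_ge] by blast
  then show ?thesis using in_span_deg_le_deg_ge by blast
qed

lemma deg_le_subset_trunc_image: "B.deg_le n \<subseteq> B.trunc n ` A.deg_le n"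
proof
  fix x assume x: "x \<in> B.deg_le n"
  obtain p t where pt: "p \<in> A.deg_lt (Suc n)" "t \<in> B.deg_ge (Suc n)" "x = p + t"
    using decompose_deg_lt_deg_ge by blast
  have "x = B.trunc n p + B.trunc n t"
    using B.trunc_deg_le[OF x] module_hom.add[OF B.linear_trunc] pt(3) by metis
  then have "x = B.trunc n p" using B.trunc_deg_ge[OF pt(2)] by simp
  then show "x \<in> B.trunc n ` A.deg_le n" using pt(1) A.deg_lt_Suc by blast
qed

lemma finite_truncations_transfer:
  assumes "A.finite_truncations" shows "B.finite_truncations"
  unfolding B.finite_truncations_def
proof
  fix n
  obtain F where F: "finite F" "A.deg_le n \<subseteq> A.span F"
    using assms unfolding A.finite_truncations_def by blast
  have "B.deg_le n \<subseteq> A.span (B.trunc n ` F)"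
    using deg_le_subset_trunc_image module_hom.spans_image[OF B.linear_trunc F(2)] by blast
  then show "\<exists>F. finite F \<and> B.deg_le n \<subseteq> A.span F" using F(1) by blast
qed

end

locale finite_two_gradings = two_gradings scale A B
  for scale :: "'k::field \<Rightarrow> 'a::ring_1 \<Rightarrow> 'a" and A B +
  assumes finite_truncations: "A.finite_truncations"
begin

lemma deg_lt_inter_deg_ge_zero:
  assumes x: "x \<in> A.deg_lt d" "x \<in> B.deg_ge d"
  shows "x = 0"
proof (cases d)
  case 0 then show ?thesis using A.deg_lt_0 x by simp
next
  case (Suc n)
  interpret swapped: two_gradings scale B A by (rule swap)
  define f where "f = A.trunc n \<circ> B.trunc n"
  have linear_f: "module_hom scale scale f"
    unfolding f_def by (rule module_hom_compose[OF B.linear_trunc A.linear_trunc])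
  have "f ` A.deg_le n \<subseteq> A.deg_le n" unfolding f_def using A.trunc_in_deg_le by auto
  moreover have "A.deg_le n \<subseteq> f ` A.deg_le n"
    using swapped.deg_le_subset_trunc_image deg_le_subset_trunc_image
    unfolding f_def image_comp[symmetric] by blast
  ultimately have "f ` A.deg_le n = A.deg_le n" by blast
  moreover obtain F where "finite F" "A.deg_le n \<subseteq> A.span F"
    using finite_truncations unfolding A.finite_truncations_def by blast
  ultimately have inj: "inj_on f (A.deg_le n)"
    using A.inj_on_if_surj_on_finite_span linear_f by blast
  have "x \<in> A.deg_le n" using x(1) Suc A.deg_lt_Suc by simp
  moreover have "f x = f 0"
    using x(2) Suc B.trunc_deg_ge module_hom.zero[OF linear_f] module_hom.zero[OF A.linear_trunc]
    unfolding f_def by simp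
  ultimately show ?thesis using inj_onD[OF inj] A.subspace_0[OF A.subspace_deg_le] by blast
qed

lemma unique_high_part: "\<exists>!t. t \<in> B.deg_ge d \<and> x - t \<in> A.deg_lt d"
proof -
  obtain p t where pt: "p \<in> A.deg_lt d" "t \<in> B.deg_ge d" "x = p + t"
    using decompose_deg_lt_deg_ge by blast
  have "t' = t" if t': "t' \<in> B.deg_ge d" "x - t' \<in> A.deg_lt d" for t'
  proof -
    have "t' - t \<in> B.deg_ge d" using t'(1) pt(2) by (rule A.subspace_diff[OF B.subspace_deg_ge])
    moreover have "p - (x - t') \<in> A.deg_lt d"
      using pt(1) t'(2) by (rule A.subspace_diff[OF A.subspace_deg_lt])
    moreover have "p - (x - t') = t' - t" using pt(3) by simp
    ultimately show ?thesis using deg_lt_inter_deg_ge_zero by fastforce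
  qed
  moreover have "x - t \<in> A.deg_lt d" using pt by simp
  ultimately show ?thesis using pt(2) by blast
qed

definition high_part :: "nat \<Rightarrow> 'a \<Rightarrow> 'a" where
  "high_part d x = (THE t. t \<in> B.deg_ge d \<and> x - t \<in> A.deg_lt d)"

lemma high_part_in_deg_ge: "high_part d x \<in> B.deg_ge d"
  and minus_high_part_in_deg_lt: "x - high_part d x \<in> A.deg_lt d"
  using theI'[OF unique_high_part[of d x]] unfolding high_part_def by auto

lemma high_part_eqI: "t \<in> B.deg_ge d \<Longrightarrow> x - t \<in> A.deg_lt d \<Longrightarrow> high_part d x = t"
  unfolding high_part_def by (rule the1_equality[OF unique_high_part]) auto

lemma high_part_add: "high_part d (x + y) = high_part d x + high_part d y"
proof (rule high_part_eqI)
  show "high_part d x + high_part d y \<in> B.deg_ge d"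
    using high_part_in_deg_ge A.subspace_add[OF B.subspace_deg_ge] by blast
  have "(x - high_part d x) + (y - high_part d y) \<in> A.deg_lt d"
    using minus_high_part_in_deg_lt A.subspace_add[OF A.subspace_deg_lt] by blast
  then show "x + y - (high_part d x + high_part d y) \<in> A.deg_lt d" by (simp add: algebra_simps)
qed

lemma high_part_scale: "high_part d (scale c x) = scale c (high_part d x)"
proof (rule high_part_eqI)
  show "scale c (high_part d x) \<in> B.deg_ge d"
    using high_part_in_deg_ge A.subspace_scale[OF B.subspace_deg_ge] by blast
  have "scale c (x - high_part d x) \<in> A.deg_lt d"
    using minus_high_part_in_deg_lt A.subspace_scale[OF A.subspace_deg_lt] by blast
  then show "scale c x - scale c (high_part d x) \<in> A.deg_lt d"
    by (simp add: A.scale_right_diff_distrib)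
qed

lemma high_part_zero [simp]: "high_part d 0 = 0"
  by (rule high_part_eqI) (auto intro: A.subspace_0[OF B.subspace_deg_ge] A.subspace_0[OF A.subspace_deg_lt])

lemma high_part_grade_in_deg_le:
  assumes "a \<in> A i" shows "high_part i a \<in> A.deg_le i"
proof -
  have "a \<in> A.deg_le i" "a - high_part i a \<in> A.deg_le i"
    using assms A.grade_subset_deg_le A.deg_lt_subset_deg_le minus_high_part_in_deg_lt by blast+
  then have "a - (a - high_part i a) \<in> A.deg_le i" by (rule A.subspace_diff[OF A.subspace_deg_le])
  then show ?thesis by simp
qed

lemma high_part_mult:
  assumes a: "a \<in> A i" and b: "b \<in> A j"
  shows "high_part (i + j) (a * b) = high_part i a * high_part j b"
proof (rule high_part_eqI)
  show "high_part i a * high_part j b \<in> B.deg_ge (i + j)"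
    by (rule B.mult_deg_ge[OF high_part_in_deg_ge high_part_in_deg_ge])
  have "(a - high_part i a) * b \<in> A.deg_lt (i + j)"
    using b A.grade_subset_deg_le by (blast intro: A.mult_deg_lt_deg_le minus_high_part_in_deg_lt)
  moreover have "high_part i a * (b - high_part j b) \<in> A.deg_lt (i + j)"
    by (rule A.mult_deg_le_deg_lt[OF high_part_grade_in_deg_le[OF a] minus_high_part_in_deg_lt])
  ultimately have "(a - high_part i a) * b + high_part i a * (b - high_part j b) \<in> A.deg_lt (i + j)"
    by (rule A.subspace_add[OF A.subspace_deg_lt])
  then show "a * b - high_part i a * high_part j b \<in> A.deg_lt (i + j)"
    by (simp add: algebra_simps)
qed

definition phi :: "'a \<Rightarrow> 'a" where
  "phi x = (\<Sum>d\<in>{d. A.component d x \<noteq> 0}. B.component d (high_part d (A.component d x)))"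

lemma phi_eq_sum:
  assumes "finite S" "{d. A.component d x \<noteq> 0} \<subseteq> S"
  shows "phi x = (\<Sum>d\<in>S. B.component d (high_part d (A.component d x)))"
  unfolding phi_def by (rule sum.mono_neutral_left) (use assms in auto)

lemma linear_phi: "module_hom scale scale phi"
proof -
  have "phi (x + y) = phi x + phi y" for x y
  proof -
    let ?S = "{d. A.component d x \<noteq> 0} \<union> {d. A.component d y \<noteq> 0} \<union> {d. A.component d (x + y) \<noteq> 0}"
    have S: "finite ?S" using A.finite_component_support by auto
    have "phi x = (\<Sum>d\<in>?S. B.component d (high_part d (A.component d x)))"
      and "phi y = (\<Sum>d\<in>?S. B.component d (high_part d (A.component d y)))"
      and "phi (x + y) = (\<Sum>d\<in>?S. B.component d (high_part d (A.component d (x + y))))"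
      by (rule phi_eq_sum[OF S]; auto)+
    then show ?thesis by (simp add: A.component_add B.component_add high_part_add sum.distrib)
  qed
  moreover have "phi (scale c x) = scale c (phi x)" for c x
  proof -
    let ?S = "{d. A.component d x \<noteq> 0} \<union> {d. A.component d (scale c x) \<noteq> 0}"
    have S: "finite ?S" using A.finite_component_support by auto
    have "phi x = (\<Sum>d\<in>?S. B.component d (high_part d (A.component d x)))"
      and "phi (scale c x) = (\<Sum>d\<in>?S. B.component d (high_part d (A.component d (scale c x))))"
      by (rule phi_eq_sum[OF S]; auto)+
    then show ?thesis
      by (simp add: A.component_scale B.component_scale high_part_scale A.scale_sum_right)
  qed
  ultimately show ?thesis by (simp add: module_hom_iff A.module_axioms)
qed

lemmas phi_add = module_hom.add[OF linear_phi]
  and phi_scale = module_hom.scale[OF linear_phi]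
  and phi_diff = module_hom.diff[OF linear_phi]
  and phi_sum = module_hom.sum[OF linear_phi]

lemma phi_homogeneous:
  assumes "a \<in> A i" shows "phi a = B.component i (high_part i a)"
proof -
  have "phi a = (\<Sum>d\<in>{i}. B.component d (high_part d (A.component d a)))"
    by (rule phi_eq_sum) (auto simp: A.component_homogeneous[OF assms])
  then show ?thesis by (simp add: A.component_homogeneous[OF assms])
qed

lemma B_component_phi: "B.component k (phi x) = B.component k (high_part k (A.component k x))"
  unfolding phi_def
  by (intro B.component_unique) (auto simp: A.finite_component_support)

lemma phi_mult_homogeneous:
  assumes a: "a \<in> A i" and b: "b \<in> A j"
  shows "phi (a * b) = phi a * phi b"
proof -
  have "phi (a * b) = B.component (i + j) (high_part i a * high_part j b)"
    using phi_homogeneous[OF A.mult_grade[OF a b]] high_part_mult[OF a b] by simp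
  also have "\<dots> = B.component i (high_part i a) * B.component j (high_part j b)"
    by (rule B.component_mult_deg_ge[OF high_part_in_deg_ge high_part_in_deg_ge])
  finally show ?thesis using phi_homogeneous[OF a] phi_homogeneous[OF b] by simp
qed

lemma phi_mult: "phi (x * y) = phi x * phi y"
proof -
  let ?S = "{i. A.component i x \<noteq> 0}" and ?T = "{j. A.component j y \<noteq> 0}"
  have x: "x = (\<Sum>i\<in>?S. A.component i x)" and y: "y = (\<Sum>j\<in>?T. A.component j y)"
    using A.sum_components[OF A.finite_component_support order_refl] by blast+
  have "phi (x * y) = phi ((\<Sum>i\<in>?S. A.component i x) * (\<Sum>j\<in>?T. A.component j y))"
    using x y by simp
  also have "\<dots> = (\<Sum>i\<in>?S. \<Sum>j\<in>?T. phi (A.component i x) * phi (A.component j y))"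
    by (simp add: sum_product phi_sum phi_mult_homogeneous[OF A.component_in_grade A.component_in_grade])
  also have "\<dots> = (\<Sum>i\<in>?S. phi (A.component i x)) * (\<Sum>j\<in>?T. phi (A.component j y))"
    by (rule sum_product[symmetric])
  also have "\<dots> = phi x * phi y"
    by (simp only: phi_sum[symmetric] x[symmetric] y[symmetric])
  finally show ?thesis .
qed

lemma phi_one: "phi 1 = 1"
proof -
  have "high_part 0 1 = 1" by (rule high_part_eqI) (auto simp: A.deg_lt_0 B.deg_ge_def)
  then show ?thesis
    using phi_homogeneous[OF A.one_in_grade_0] B.component_homogeneous[OF B.one_in_grade_0] by simp
qed

text \<open>A nonzero element of \<open>A k\<close> has a nonzero image: otherwise its high part lies in
  \<open>A.deg_le k \<inter> B.deg_ge (Suc k)\<close>.\<close>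
lemma inj_phi: "inj phi"
proof (rule inj_onI)
  fix x y assume "phi x = phi y"
  then have phi0: "phi (x - y) = 0" by (simp add: phi_diff)
  have "A.component k (x - y) = 0" for k
  proof -
    let ?a = "A.component k (x - y)"
    have "B.component k (high_part k ?a) = 0" using B_component_phi[of k "x - y"] phi0 by simp
    then have "high_part k ?a \<in> B.deg_ge (Suc k)"
      using high_part_in_deg_ge[of k ?a] unfolding B.deg_ge_def by (auto simp: less_Suc_eq)
    moreover have "high_part k ?a \<in> A.deg_lt (Suc k)"
      using high_part_grade_in_deg_le A.deg_lt_Suc by simp
    ultimately have "high_part k ?a = 0" by (rule deg_lt_inter_deg_ge_zero[rotated])
    then have "?a \<in> A.deg_lt k" using minus_high_part_in_deg_lt[of ?a k] by simp
    then show ?thesis using A.deg_lt_inter_grade by simp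
  qed
  then show "x = y" using A.components_zero_imp_zero by (metis eq_iff_diff_eq_0)
qed

lemma deg_lt_1_subset_B0: "A.deg_lt 1 \<subseteq> B 0"
proof
  fix x assume "x \<in> A.deg_lt 1"
  then have "x = A.component 0 x" using A.deg_le_sum_components[of x 0] A.deg_lt_Suc[of 0] by simp
  then show "x \<in> B 0" using A0 B0 A.component_in_grade by metis
qed

lemma B_component_1_eq_phi:
  assumes x: "x \<in> A.deg_le 1" shows "B.component 1 x = phi (A.component 1 x)"
proof -
  let ?a = "A.component 1 x"
  have "{..1::nat} = {0, 1}" by auto
  then have "x = A.component 0 x + ?a" using A.deg_le_sum_components[OF x] by simp
  then have "B.component 1 x = B.component 1 (A.component 0 x) + B.component 1 ?a"
    by (metis B.component_add)
  moreover have "B.component 1 (A.component 0 x) = 0"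
    using A0 B0 A.component_in_grade B.component_homogeneous by (metis zero_neq_one)
  moreover have "B.component 1 (?a - high_part 1 ?a) = 0"
    using deg_lt_1_subset_B0 minus_high_part_in_deg_lt B.component_homogeneous
    by (metis subsetD zero_neq_one)
  ultimately show ?thesis
    by (simp add: B.component_diff phi_homogeneous[OF A.component_in_grade])
qed

lemma B1_subset_range_phi: "B 1 \<subseteq> range phi"
proof
  fix y assume y: "y \<in> B 1"
  obtain p t where pt: "p \<in> A.deg_lt 2" "t \<in> B.deg_ge 2" "y = p + t"
    using decompose_deg_lt_deg_ge by blast
  have "y = B.component 1 y" using B.component_homogeneous[OF y] by simp
  also have "\<dots> = B.component 1 p"
    using pt(2,3) B.deg_ge_component_zero[OF pt(2), of 1] by (simp add: B.component_add)
  also have "\<dots> = phi (A.component 1 p)"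
    using pt(1) A.deg_lt_Suc[of 1] by (intro B_component_1_eq_phi) (simp add: numeral_2_eq_2)
  finally show "y \<in> range phi" by blast
qed

lemma surj_phi: "surj phi"
proof -
  have "subalg_gen scale (B 1) \<subseteq> range phi"
  proof
    fix x assume "x \<in> subalg_gen scale (B 1)" then show "x \<in> range phi"
    proof induct
      case (gen x) then show ?case using B1_subset_range_phi by blast
    next
      case one then show ?case using phi_one by (metis rangeI)
    next
      case zero then show ?case by (metis rangeI module_hom.zero[OF linear_phi])
    next
      case (add x y)
      then obtain a b where "x = phi a" "y = phi b" by blast
      then show ?case by (metis rangeI phi_add)
    next
      case (mult x y)
      then obtain a b where "x = phi a" "y = phi b" by blast
      then show ?case by (metis rangeI phi_mult)
    next
      case (smult x c)
      then obtain a where "x = phi a" by blast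
      then show ?case by (metis rangeI phi_scale)
    qed
  qed
  then show ?thesis using genB by auto
qed

lemma phi_image_grade: "phi ` A i = B i"
proof
  show "phi ` A i \<subseteq> B i" using phi_homogeneous by auto
  show "B i \<subseteq> phi ` A i"
  proof
    fix y assume y: "y \<in> B i"
    obtain x where x: "y = phi x" using surj_phi by (metis surjD)
    have "y = B.component i y" using B.component_homogeneous[OF y] by simp
    also have "\<dots> = phi (A.component i x)"
      unfolding x B_component_phi by (simp add: phi_homogeneous[OF A.component_in_grade])
    finally show "y \<in> phi ` A i" by simp
  qed
qed

lemma alg_automorphism_phi: "alg_automorphism scale phi"
  unfolding alg_automorphism_def bij_def
  using inj_phi surj_phi phi_one phi_add phi_mult phi_scale by blast

end

theorem corollary2:
  fixes scale :: "'k::field \<Rightarrow> 'a::ring_1 \<Rightarrow> 'a"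
    and A B :: "nat \<Rightarrow> 'a set"
  assumes alg: "k_algebra scale"
    and gradA: "graded_decomp scale A"
    and gradB: "graded_decomp scale B"
    and A0: "A 0 = range (\<lambda>c. scale c 1)"
    and B0: "B 0 = range (\<lambda>c. scale c 1)"
    and genA: "subalg_gen scale (A 1) = UNIV"
    and genB: "subalg_gen scale (B 1) = UNIV"
    and fd: "fin_dim scale (A 1) \<or> fin_dim scale (B 1)"
  shows "\<exists>\<phi>. alg_automorphism scale \<phi> \<and> (\<forall>i. \<phi> ` A i = B i)"
proof -
  interpret AB: two_gradings scale A B
    using alg gradA gradB A0 B0 genA genB
    unfolding two_gradings_def two_gradings_axioms_def graded_algebra_def graded_algebra_axioms_def
      algebra_space_def algebra_space_axioms_def k_algebra_def module_iff_vector_space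
    by blast
  interpret BA: two_gradings scale B A by (rule AB.swap)
  have "AB.A.finite_truncations"
    using fd
  proof
    assume "fin_dim scale (A 1)"
    then show ?thesis by (rule AB.A.finite_truncations_if_fin_dim_grade_1[OF genA])
  next
    assume "fin_dim scale (B 1)"
    then have "AB.B.finite_truncations" by (rule AB.B.finite_truncations_if_fin_dim_grade_1[OF genB])
    then show ?thesis by (rule BA.finite_truncations_transfer)
  qed
  then interpret finite_two_gradings scale A B by unfold_locales
  show ?thesis using alg_automorphism_phi phi_image_grade by blast
qed

end
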